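(* Let $0 \leq a \leq b \leq 1$ and $r \in (0,3)$. For any $u \geq r$ and $t \geq \frac{1}{200}$, \[ g_t'(u) = O\!\left(r^{-\frac23}\exp\!\Big(-t^2\delta_b^2 - \tfrac{7}{32}u^{\frac43}t^{-\frac23} + \tfrac{3}{16}u^{\frac23}t^{\frac23}\Big)\right), \] where $\delta_b = \max(\frac14 - b, 0)$.
   Context: For $0\le a\le b$ and $t>0$, let $f_t(\lambda) = \frac{t}{\sqrt\pi}\int_a^b\exp(-t^2(\lambda-\mu)^2)\,d\mu$, let $h_t(r) = f_t(\frac14 + r^2)$ for $r\in\mathbb{C}$, and let $g_t(u) = \frac{1}{2\pi}\int_{-\infty}^{+\infty}h_t(r)e^{iru}\,dr$ be its inverse Fourier transform. $T_1 = O(T_2)$ means $|T_1|\le CT_2$ with a universal constant $C$ independent of $a,b,r,u,t$. *)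

theory Defs
  imports "HOL-Analysis.Analysis"
begin

definition f_t :: "real \<Rightarrow> real \<Rightarrow> real \<Rightarrow> complex \<Rightarrow> complex" where
  "f_t a b t lam = complex_of_real (t / sqrt pi) *
     integral {a..b} (\<lambda>\<mu>::real. exp (- (complex_of_real t)\<^sup>2 * (lam - complex_of_real \<mu>)\<^sup>2))"

definition h_t :: "real \<Rightarrow> real \<Rightarrow> real \<Rightarrow> complex \<Rightarrow> complex" where
  "h_t a b t r = f_t a b t (1/4 + r\<^sup>2)"

definition g_t :: "real \<Rightarrow> real \<Rightarrow> real \<Rightarrow> real \<Rightarrow> complex" where
  "g_t a b t u = complex_of_real (1 / (2 * pi)) *
     integral UNIV (\<lambda>r::real. h_t a b t (complex_of_real r) * exp (\<i> * complex_of_real (r * u)))"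

definition delta_b :: "real \<Rightarrow> real" where
  "delta_b b = max (1/4 - b) 0"

end

(*
  With Phi(z) = z h_t(z) exp(izu), differentiation under the integral sign gives
  g_t'(u) = i/(2 pi) * integral of Phi over the real line.  Since h_t is entire and decays like a
  Gaussian in horizontal strips, Cauchy's theorem moves the line of integration to Im z = y > 0,
  where exp(izu) has modulus exp(-yu).  On that line
  |exp(-t^2 (1/4 + z^2 - mu)^2)| = exp(-t^2 q) with q = (1/4 - mu + x^2 - y^2)^2 - 4 x^2 y^2,
  and completing the square in x^2 gives q >= (x^2 - D)^2 - R(mu).  The x-integral of
  (|x| + y) exp(-t^2 (x^2 - D)^2) is at most pi ((1 + y)/t + 2y) by an arctangent bound, and
  integrating exp(t^2 R(mu)) over [a, b] leaves exp(t^2 (8y^4 + 3y^2)) times a harmless factor;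
  for b < 1/4 the remainder R also contains -(1/4 - b)^2, which produces exp(-t^2 delta_b^2).
  Finally y = u^(1/3) / (4 t^(2/3)) turns -yu + t^2 (8y^4 + 3y^2) into the exponent of the
  statement.
*)
theory Submission
  imports Defs "HOL-Complex_Analysis.Complex_Analysis" "HOL-Probability.Characteristic_Functions"
    "HOL-Real_Asymp.Real_Asymp"
begin

section \<open>Integrals over the real line\<close>

lemma integrable_on_UNIV_if_dominated:
  fixes f :: "'a::euclidean_space \<Rightarrow> 'b::banach"
  assumes "continuous_on UNIV f" "\<And>x. norm (f x) \<le> g x" "g integrable_on UNIV"
  shows "f integrable_on UNIV"
proof (rule integrable_on_all_intervals_integrable_bound[OF _ _ assms(3)])
  show "(\<lambda>x. if x \<in> UNIV then f x else 0) integrable_on cbox a b" for a b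
    using integrable_continuous[OF continuous_on_subset[OF assms(1)]] by simp
qed (use assms in auto)

lemma gaussian_moment_integrable_on:
  fixes c :: real
  assumes "c > 0"
  shows "(\<lambda>x. exp (- c * x\<^sup>2) * \<bar>x\<bar> ^ k) integrable_on UNIV"
proof -
  define \<sigma> where "\<sigma> = sqrt (1 / (2 * c))"
  have \<sigma>: "\<sigma> > 0" "2 * \<sigma>\<^sup>2 = 1 / c" using assms by (simp_all add: \<sigma>_def)
  have "integrable lborel (\<lambda>x. normal_density 0 \<sigma> x * \<bar>x - 0\<bar> ^ k)"
    by (rule integrable_normal_moment_abs[OF \<sigma>(1)])
  then have "(\<lambda>x. sqrt (2 * pi * \<sigma>\<^sup>2) * (normal_density 0 \<sigma> x * \<bar>x\<bar> ^ k)) integrable_on UNIV"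
    by (simp add: integrable_on_lborel)
  moreover have "sqrt (2 * pi * \<sigma>\<^sup>2) * (normal_density 0 \<sigma> x * \<bar>x\<bar> ^ k) = exp (- c * x\<^sup>2) * \<bar>x\<bar> ^ k" for x
    using \<sigma> assms by (simp add: normal_density_def field_simps)
  ultimately show ?thesis by simp
qed

lemma integral_symmetric_tendsto_integral_UNIV:
  fixes f :: "real \<Rightarrow> 'a::euclidean_space"
  assumes "continuous_on UNIV f" "\<And>x. norm (f x) \<le> g x" "g integrable_on UNIV"
  shows "(\<lambda>n. integral {- real n..real n} f) \<longlonglongrightarrow> integral UNIV f"
proof -
  define f\<^sub>n where "f\<^sub>n n = (\<lambda>x. if x \<in> {- real n..real n} then f x else 0)" for n
  have "(\<lambda>n. integral UNIV (f\<^sub>n n)) \<longlonglongrightarrow> integral UNIV f"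
  proof (rule dominated_convergence(2)[OF _ assms(3)])
    show "f\<^sub>n n integrable_on UNIV" for n
      unfolding f\<^sub>n_def integrable_restrict_UNIV
      by (intro integrable_continuous_interval continuous_on_subset[OF assms(1)]) auto
    show "norm (f\<^sub>n n x) \<le> g x" for n x
      unfolding f\<^sub>n_def using assms(2) order_trans[OF norm_ge_zero assms(2)] by auto
    show "(\<lambda>n. f\<^sub>n n x) \<longlonglongrightarrow> f x" for x
    proof (rule tendsto_eventually)
      obtain N :: nat where "\<bar>x\<bar> \<le> real N" using real_arch_simple by blast
      then show "\<forall>\<^sub>F n in sequentially. f\<^sub>n n x = f x"
        unfolding f\<^sub>n_def eventually_sequentially by (intro exI[of _ N]) auto
    qed
  qed
  then show ?thesis unfolding f\<^sub>n_def integral_restrict_UNIV .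
qed

lemma integral_tendsto_at_if_dominated:
  fixes Q :: "real \<Rightarrow> 'n::euclidean_space \<Rightarrow> 'm::euclidean_space"
  assumes "\<And>k. k \<noteq> k\<^sub>0 \<Longrightarrow> Q k integrable_on S" "w integrable_on S"
    and "\<And>k x. k \<noteq> k\<^sub>0 \<Longrightarrow> x \<in> S \<Longrightarrow> norm (Q k x) \<le> w x"
    and "\<And>x. x \<in> S \<Longrightarrow> ((\<lambda>k. Q k x) \<longlongrightarrow> L x) (at k\<^sub>0)"
  shows "((\<lambda>k. integral S (Q k)) \<longlongrightarrow> integral S L) (at k\<^sub>0)"
  unfolding tendsto_at_iff_sequentially
proof (intro allI impI)
  fix X :: "nat \<Rightarrow> real"
  assume X: "\<forall>i. X i \<in> UNIV - {k\<^sub>0}" "X \<longlonglongrightarrow> k\<^sub>0"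
  then have "filterlim X (at k\<^sub>0) sequentially"
    by (intro filterlim_atI) auto
  with X assms have "(\<lambda>n. integral S (Q (X n))) \<longlonglongrightarrow> integral S L"
    by (intro dominated_convergence(2)[where h = w]) (auto intro: filterlim_compose[OF assms(4)])
  then show "((\<lambda>k. integral S (Q k)) \<circ> X) \<longlonglongrightarrow> integral S L"
    by (simp add: o_def)
qed

lemma filterlim_of_real_at:
  "filterlim (of_real :: real \<Rightarrow> 'a::real_normed_algebra_1) (at (of_real x)) (at x)"
proof (rule filterlim_atI)
  show "((of_real :: real \<Rightarrow> 'a) \<longlongrightarrow> of_real x) (at x)"
    by (intro tendsto_intros)
  show "\<forall>\<^sub>F y in at x. (of_real y :: 'a) \<noteq> of_real x"
    by (auto simp: eventually_at_filter)
qed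

lemma has_vector_derivative_if_difference_quotient_tendsto:
  fixes G :: "real \<Rightarrow> 'a::real_normed_field"
  assumes "((\<lambda>k. (G (u + k) - G u) / of_real k) \<longlongrightarrow> D) (at 0)"
  shows "(G has_vector_derivative D) (at u)"
proof -
  have lim: "((\<lambda>k. norm ((G (u + k) - G u) / of_real k - D)) \<longlongrightarrow> 0) (at 0)"
    using tendsto_diff[OF assms tendsto_const[of D]] by (simp add: tendsto_norm_zero)
  have eq: "\<forall>\<^sub>F k in at 0. norm ((G (u + k) - G u) / of_real k - D) = norm (G (u + k) - G u - k *\<^sub>R D) / norm k"
  proof (rule eventually_mono[OF eventually_neq_at_within[of 0 0 UNIV]])
    fix k :: real
    assume "k \<noteq> 0"
    then have "G (u + k) - G u - k *\<^sub>R D = of_real k * ((G (u + k) - G u) / of_real k - D)"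
      by (simp add: scaleR_conv_of_real field_simps)
    with \<open>k \<noteq> 0\<close> show "norm ((G (u + k) - G u) / of_real k - D) = norm (G (u + k) - G u - k *\<^sub>R D) / norm k"
      by (simp add: norm_mult)
  qed
  have "((\<lambda>k. norm (G (u + k) - G u - k *\<^sub>R D) / norm k) \<longlongrightarrow> 0) (at 0)"
    using tendsto_cong[OF eq] lim by blast
  then show ?thesis
    unfolding has_vector_derivative_def has_derivative_at by (auto intro: bounded_linear_scaleR_left)
qed

lemma norm_exp_ii_diff_le: "norm (exp (\<i> * of_real \<alpha>) - exp (\<i> * of_real \<beta>)) \<le> \<bar>\<alpha> - \<beta>\<bar>"
proof -
  have "exp (\<i> * of_real \<alpha>) - exp (\<i> * of_real \<beta>) = exp (\<i> * of_real \<beta>) * (exp (\<i> * of_real (\<alpha> - \<beta>)) - 1)"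
    by (simp add: algebra_simps flip: exp_add)
  moreover have "norm (exp (\<i> * of_real (\<alpha> - \<beta>)) - 1) \<le> \<bar>\<alpha> - \<beta>\<bar>"
    using iexp_approx1[of "\<alpha> - \<beta>" 0] by simp
  ultimately show ?thesis by (simp add: norm_mult)
qed

lemma exp_ii_difference_quotient_tendsto:
  "((\<lambda>k. (exp (\<i> * of_real (r * (u + k))) - exp (\<i> * of_real (r * u))) / of_real k)
     \<longlongrightarrow> \<i> * of_real r * exp (\<i> * of_real (r * u))) (at 0)"
proof -
  have "((\<lambda>z. exp (\<i> * of_real r * (of_real u + z))) has_field_derivative
         \<i> * of_real r * exp (\<i> * of_real r * (of_real u + 0))) (at 0)"
    by (auto intro!: derivative_eq_intros)
  then have "((\<lambda>z. (exp (\<i> * of_real r * (of_real u + z)) - exp (\<i> * of_real r * of_real u)) / z)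
             \<longlongrightarrow> \<i> * of_real r * exp (\<i> * of_real r * of_real u)) (at 0)"
    by (simp add: DERIV_def)
  from filterlim_compose[OF this filterlim_of_real_at[of 0, simplified]] show ?thesis
    by (simp add: algebra_simps)
qed

text \<open>The difference quotients of \<open>exp (i r v)\<close> in \<open>v\<close> are bounded by \<open>\<bar>r\<bar>\<close>, so dominated
  convergence applies.\<close>
lemma has_vector_derivative_fourier_integral:
  fixes H :: "real \<Rightarrow> complex"
  assumes H: "continuous_on UNIV H"
    and "\<And>r. norm (H r) \<le> w r" "\<And>r. \<bar>r\<bar> * norm (H r) \<le> w r" and w: "w integrable_on UNIV"
  shows "((\<lambda>v. integral UNIV (\<lambda>r. H r * exp (\<i> * of_real (r * v)))) has_vector_derivative
          integral UNIV (\<lambda>r. H r * (\<i> * of_real r) * exp (\<i> * of_real (r * u)))) (at u)"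
proof (rule has_vector_derivative_if_difference_quotient_tendsto)
  define E where "E v r = H r * exp (\<i> * of_real (r * v))" for v r
  define Q where "Q k r = (E (u + k) r - E u r) / of_real k" for k r
  have E: "E v integrable_on UNIV" for v
    unfolding E_def using assms
    by (intro integrable_on_UNIV_if_dominated[OF _ _ w] continuous_intros) (auto simp: norm_mult)
  have "integral UNIV (Q k) = (integral UNIV (E (u + k)) - integral UNIV (E u)) / of_real k" for k
    unfolding Q_def using E by (simp add: integral_diff)
  moreover have "((\<lambda>k. integral UNIV (Q k)) \<longlongrightarrow> integral UNIV (\<lambda>r. H r * (\<i> * of_real r) * exp (\<i> * of_real (r * u)))) (at 0)"
  proof (rule integral_tendsto_at_if_dominated[OF _ w])
    show "Q k integrable_on UNIV" for k
      unfolding Q_def using E by (intro integrable_diff integrable_on_divide)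
    show "norm (Q k r) \<le> w r" if "k \<noteq> 0" for k r
    proof -
      have "norm (exp (\<i> * of_real (r * (u + k))) - exp (\<i> * of_real (r * u))) \<le> \<bar>r\<bar> * \<bar>k\<bar>"
        using norm_exp_ii_diff_le[of "r * (u + k)" "r * u"] by (simp add: algebra_simps abs_mult)
      then have "norm (Q k r) \<le> norm (H r) * \<bar>r\<bar>"
        unfolding Q_def E_def using that
        by (simp add: norm_divide norm_mult divide_le_eq flip: right_diff_distrib)
           (metis mult.assoc mult_left_mono norm_ge_zero)
      with assms(3)[of r] show ?thesis by (simp add: mult.commute)
    qed
    show "((\<lambda>k. Q k r) \<longlongrightarrow> H r * (\<i> * of_real r) * exp (\<i> * of_real (r * u))) (at 0)" for r
      using tendsto_mult_left[OF exp_ii_difference_quotient_tendsto, of "H r" r u]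
      unfolding Q_def E_def by (simp add: mult_ac right_diff_distrib)
  qed
  ultimately show "((\<lambda>k. (integral UNIV (E (u + k)) - integral UNIV (E u)) / of_real k)
      \<longlongrightarrow> integral UNIV (\<lambda>r. H r * (\<i> * of_real r) * exp (\<i> * of_real (r * u)))) (at 0)"
    by simp
qed

section \<open>Shifting the line of integration\<close>

lemma has_integral_along_line:
  fixes F P :: "complex \<Rightarrow> complex"
  assumes P: "\<And>z. (P has_field_derivative F z) (at z)" and "a \<le> b"
  shows "((\<lambda>x. d * F (c + of_real x * d)) has_integral P (c + of_real b * d) - P (c + of_real a * d)) {a..b}"
proof -
  have "((\<lambda>x. P (c + of_real x * d)) has_vector_derivative d * F (c + of_real x * d)) (at x within {a..b})" for x
  proof -
    have "((\<lambda>x. c + of_real x * d) has_vector_derivative d) (at x)"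
      by (auto intro!: derivative_eq_intros simp: has_vector_derivative_def scaleR_conv_of_real)
    from field_vector_diff_chain_at[OF this P] show ?thesis
      by (auto simp: o_def intro: has_vector_derivative_at_within)
  qed
  from fundamental_theorem_of_calculus[OF \<open>a \<le> b\<close> this] show ?thesis by simp
qed

text \<open>Cauchy's theorem for the rectangle with corners \<open>\<plusminus>s\<close> and \<open>\<plusminus>s + iy\<close>, via a primitive of \<open>F\<close>.\<close>
lemma norm_integral_shift_le:
  fixes F :: "complex \<Rightarrow> complex"
  assumes holo: "F holomorphic_on UNIV" and "0 \<le> s" "0 \<le> y"
    and bound: "\<And>x v. \<bar>x\<bar> = s \<Longrightarrow> v \<in> {0..y} \<Longrightarrow> norm (F (of_real x + \<i> * of_real v)) \<le> M"
  shows "norm (integral {-s..s} (\<lambda>x. F (of_real x)) - integral {-s..s} (\<lambda>x. F (of_real x + \<i> * of_real y)))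
          \<le> 2 * y * M"
proof -
  obtain P where "\<And>z. z \<in> UNIV \<Longrightarrow> (P has_field_derivative F z) (at z within UNIV)"
    using holomorphic_convex_primitive'[OF convex_UNIV open_UNIV holo] by blast
  then have P: "\<And>z. (P has_field_derivative F z) (at z)" by simp
  have contF: "continuous_on UNIV F"
    using holo holomorphic_on_imp_continuous_on by blast
  have horizontal: "integral {-s..s} (\<lambda>x. F (of_real x + \<i> * of_real v))
      = P (of_real s + \<i> * of_real v) - P (of_real (-s) + \<i> * of_real v)" for v
    using has_integral_along_line[OF P, of "-s" s 1 "\<i> * of_real v"] \<open>0 \<le> s\<close>
    by (simp add: integral_unique add.commute)
  have vertical: "norm (P (of_real x + \<i> * of_real y) - P (of_real x)) \<le> y * M" if "\<bar>x\<bar> = s" for x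
  proof -
    have "((\<lambda>v. \<i> * F (of_real x + \<i> * of_real v)) has_integral
           P (of_real x + \<i> * of_real y) - P (of_real x)) {0..y}"
      using has_integral_along_line[OF P \<open>0 \<le> y\<close>, of "\<i>" "of_real x"] by (simp add: mult.commute)
    then have "P (of_real x + \<i> * of_real y) - P (of_real x) = integral {0..y} (\<lambda>v. \<i> * F (of_real x + \<i> * of_real v))"
      by (rule integral_unique[symmetric])
    also have "norm \<dots> \<le> M * (y - 0)"
      using bound[OF that] \<open>0 \<le> y\<close>
      by (intro integral_bound continuous_intros continuous_on_compose2[OF contF]) (auto simp: norm_mult)
    finally show ?thesis by (simp add: mult.commute)
  qed
  have "integral {-s..s} (\<lambda>x. F (of_real x)) - integral {-s..s} (\<lambda>x. F (of_real x + \<i> * of_real y))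
       = (P (of_real (-s) + \<i> * of_real y) - P (of_real (-s))) - (P (of_real s + \<i> * of_real y) - P (of_real s))"
    using horizontal[of 0] horizontal[of y] by (simp add: algebra_simps)
  also have "norm \<dots> \<le> y * M + y * M"
  proof (rule order_trans[OF norm_triangle_ineq4 add_mono])
    show "norm (P (of_real (-s) + \<i> * of_real y) - P (of_real (-s))) \<le> y * M"
      using \<open>0 \<le> s\<close> by (intro vertical) simp
    show "norm (P (of_real s + \<i> * of_real y) - P (of_real s)) \<le> y * M"
      using \<open>0 \<le> s\<close> by (intro vertical) simp
  qed
  finally show ?thesis by (simp add: mult_ac)
qed

text \<open>The vertical sides of the rectangles vanish in the limit.\<close>
lemma norm_integral_real_line_le_shifted:
  fixes F :: "complex \<Rightarrow> complex"
  assumes holo: "F holomorphic_on UNIV" and "0 \<le> y"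
    and dom: "\<And>x. norm (F (of_real x)) \<le> g x" and g: "g integrable_on UNIV"
    and side: "\<And>x v. v \<in> {0..y} \<Longrightarrow> norm (F (of_real x + \<i> * of_real v)) \<le> M \<bar>x\<bar>"
    and M: "(M \<longlongrightarrow> 0) at_top"
    and B: "\<And>s. 0 \<le> s \<Longrightarrow> norm (integral {-s..s} (\<lambda>x. F (of_real x + \<i> * of_real y))) \<le> B"
  shows "norm (integral UNIV (\<lambda>x. F (of_real x))) \<le> B"
proof -
  have "continuous_on UNIV F"
    using holo holomorphic_on_imp_continuous_on by blast
  have contF: "continuous_on UNIV (\<lambda>x. F (of_real x))"
    by (intro continuous_on_compose2[OF \<open>continuous_on UNIV F\<close>] continuous_intros) auto
  have lim: "(\<lambda>n. norm (integral {- real n..real n} (\<lambda>x. F (of_real x)))) \<longlonglongrightarrow> norm (integral UNIV (\<lambda>x. F (of_real x)))"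
    by (intro tendsto_norm integral_symmetric_tendsto_integral_UNIV[OF contF dom g])
  have lim_bound: "(\<lambda>n. B + 2 * y * M (real n)) \<longlonglongrightarrow> B + 2 * y * 0"
    by (intro tendsto_intros filterlim_compose[OF M filterlim_real_sequentially])
  have "norm (integral {- real n..real n} (\<lambda>x. F (of_real x))) \<le> B + 2 * y * M (real n)" for n
  proof -
    have "norm (integral {- real n..real n} (\<lambda>x. F (of_real x))
          - integral {- real n..real n} (\<lambda>x. F (of_real x + \<i> * of_real y))) \<le> 2 * y * M (real n)"
    proof (rule norm_integral_shift_le[OF holo _ \<open>0 \<le> y\<close>])
      show "norm (F (of_real x + \<i> * of_real v)) \<le> M (real n)" if "\<bar>x\<bar> = real n" "v \<in> {0..y}" for x v
        using side[OF that(2), of x] that(1) by simp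
    qed simp
    moreover have "norm (integral {- real n..real n} (\<lambda>x. F (of_real x + \<i> * of_real y))) \<le> B"
      using B[of "real n"] by simp
    ultimately show ?thesis
      using norm_triangle_sub[of "integral {- real n..real n} (\<lambda>x. F (of_real x))"
          "integral {- real n..real n} (\<lambda>x. F (of_real x + \<i> * of_real y))"] by linarith
  qed
  then show ?thesis
    using tendsto_le[OF sequentially_bot lim_bound lim] by (simp add: always_eventually)
qed

section \<open>Arctangent bounds\<close>

lemma has_real_derivative_arctan_square:
  fixes t D :: real
  assumes "0 < t"
  shows "((\<lambda>x. arctan (t * (x\<^sup>2 - D)) / (2 * t)) has_real_derivative x / (1 + t\<^sup>2 * (x\<^sup>2 - D)\<^sup>2))
    (at x within S)"
proof (rule DERIV_cong)
  show "((\<lambda>x. arctan (t * (x\<^sup>2 - D)) / (2 * t)) has_real_derivative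
      inverse (1 + (t * (x\<^sup>2 - D))\<^sup>2) * (t * (2 * x)) / (2 * t)) (at x within S)"
    by (auto intro!: derivative_eq_intros)
  have "inverse (1 + (t * (x\<^sup>2 - D))\<^sup>2) * (t * (2 * x)) / (2 * t)
      = inverse (1 + t\<^sup>2 * (x\<^sup>2 - D)\<^sup>2) * (t * (2 * x) / (2 * t))"
    by (simp only: power_mult_distrib times_divide_eq_right)
  also have "t * (2 * x) / (2 * t) = x"
    using assms by simp
  also have "inverse (1 + t\<^sup>2 * (x\<^sup>2 - D)\<^sup>2) * x = x / (1 + t\<^sup>2 * (x\<^sup>2 - D)\<^sup>2)"
    by (simp add: divide_inverse mult.commute)
  finally show "inverse (1 + (t * (x\<^sup>2 - D))\<^sup>2) * (t * (2 * x)) / (2 * t) = x / (1 + t\<^sup>2 * (x\<^sup>2 - D)\<^sup>2)" .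
qed

lemma abs_div_one_plus_square_integral:
  fixes t D s :: real
  assumes "t > 0" "s \<ge> 0"
  shows "(\<lambda>x. \<bar>x\<bar> / (1 + t\<^sup>2 * (x\<^sup>2 - D)\<^sup>2)) integrable_on {-s..s}"
    and "integral {-s..s} (\<lambda>x. \<bar>x\<bar> / (1 + t\<^sup>2 * (x\<^sup>2 - D)\<^sup>2)) \<le> pi / t"
proof -
  define A where "A = (\<lambda>x. arctan (t * (x\<^sup>2 - D)) / (2 * t))"
  have A: "(A has_vector_derivative x / (1 + t\<^sup>2 * (x\<^sup>2 - D)\<^sup>2)) (at x within S)" for x S
    using has_real_derivative_arctan_square[OF \<open>t > 0\<close>]
    unfolding A_def by (simp add: has_real_derivative_iff_has_vector_derivative)
  have "((\<lambda>x. x / (1 + t\<^sup>2 * (x\<^sup>2 - D)\<^sup>2)) has_integral A s - A 0) {0..s}"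
    using \<open>s \<ge> 0\<close> A by (rule fundamental_theorem_of_calculus)
  then have right: "((\<lambda>x. \<bar>x\<bar> / (1 + t\<^sup>2 * (x\<^sup>2 - D)\<^sup>2)) has_integral A s - A 0) {0..s}"
    by (rule has_integral_eq[rotated]) simp
  have "((\<lambda>x. - (x / (1 + t\<^sup>2 * (x\<^sup>2 - D)\<^sup>2))) has_integral - A 0 - - A (-s)) {-s..0}"
    using \<open>s \<ge> 0\<close> by (intro fundamental_theorem_of_calculus has_vector_derivative_minus A) simp
  moreover have "- A 0 - - A (-s) = A s - A 0"
    by (simp add: A_def)
  ultimately have "((\<lambda>x. - (x / (1 + t\<^sup>2 * (x\<^sup>2 - D)\<^sup>2))) has_integral A s - A 0) {-s..0}"
    by simp
  then have left: "((\<lambda>x. \<bar>x\<bar> / (1 + t\<^sup>2 * (x\<^sup>2 - D)\<^sup>2)) has_integral A s - A 0) {-s..0}"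
    by (rule has_integral_eq[rotated]) simp
  have int: "((\<lambda>x. \<bar>x\<bar> / (1 + t\<^sup>2 * (x\<^sup>2 - D)\<^sup>2)) has_integral (A s - A 0) + (A s - A 0)) {-s..s}"
    using has_integral_combine[OF _ _ left right] \<open>s \<ge> 0\<close> by simp
  then show "(\<lambda>x. \<bar>x\<bar> / (1 + t\<^sup>2 * (x\<^sup>2 - D)\<^sup>2)) integrable_on {-s..s}" by blast
  have "(A s - A 0) + (A s - A 0) = (arctan (t * (s\<^sup>2 - D)) - arctan (t * (0 - D))) / t"
    using \<open>t > 0\<close> by (simp add: A_def field_simps)
  also have "\<dots> \<le> pi / t"
    using arctan_bounded[of "t * (s\<^sup>2 - D)"] arctan_bounded[of "t * (0 - D)"] \<open>t > 0\<close>
    by (intro divide_right_mono) auto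
  finally show "integral {-s..s} (\<lambda>x. \<bar>x\<bar> / (1 + t\<^sup>2 * (x\<^sup>2 - D)\<^sup>2)) \<le> pi / t"
    using integral_unique[OF int] by simp
qed

lemma inverse_one_plus_square_integral:
  assumes "s \<ge> 0"
  shows "(\<lambda>x. 1 / (1 + x\<^sup>2)) integrable_on {-s..s}"
    and "integral {-s..s} (\<lambda>x. 1 / (1 + x\<^sup>2)) \<le> pi"
proof -
  have int: "((\<lambda>x. 1 / (1 + x\<^sup>2)) has_integral arctan s - arctan (-s)) {-s..s}"
    using assms DERIV_arctan
    by (intro fundamental_theorem_of_calculus)
       (auto simp: has_real_derivative_iff_has_vector_derivative[symmetric] divide_inverse
             intro: has_field_derivative_at_within)
  then show "(\<lambda>x. 1 / (1 + x\<^sup>2)) integrable_on {-s..s}" by blast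
  show "integral {-s..s} (\<lambda>x. 1 / (1 + x\<^sup>2)) \<le> pi"
    using integral_unique[OF int] arctan_bounded[of s] arctan_bounded[of "-s"] by simp
qed

lemma exp_neg_le_inverse: "0 \<le> (v::real) \<Longrightarrow> exp (- v) \<le> 1 / (1 + v)"
  using exp_ge_add_one_self[of v] by (simp add: exp_minus field_simps)

text \<open>\<open>\<bar>x\<bar> exp (- v) \<le> \<bar>x\<bar> / (1 + v)\<close>, and \<open>exp (- v) \<le> 1 \<le> 2 / (1 + x\<^sup>2)\<close> for \<open>\<bar>x\<bar> \<le> 1\<close>.\<close>
lemma abs_plus_mult_exp_neg_le:
  fixes x y v :: real
  assumes "0 \<le> v" "0 \<le> y"
  shows "(\<bar>x\<bar> + y) * exp (- v) \<le> (1 + y) * (\<bar>x\<bar> / (1 + v)) + 2 * y * (1 / (1 + x\<^sup>2))"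
proof -
  have e: "exp (- v) \<le> 1 / (1 + v)" by (rule exp_neg_le_inverse[OF \<open>0 \<le> v\<close>])
  have "exp (- v) \<le> \<bar>x\<bar> / (1 + v) + 2 * (1 / (1 + x\<^sup>2))"
  proof (cases "\<bar>x\<bar> \<ge> 1")
    case True
    then have "1 / (1 + v) \<le> \<bar>x\<bar> / (1 + v)" using \<open>0 \<le> v\<close> by (intro divide_right_mono) auto
    moreover have "0 \<le> 2 * (1 / (1 + x\<^sup>2))" by simp
    ultimately show ?thesis using e by linarith
  next
    case False
    then have "x\<^sup>2 \<le> 1" by (simp add: abs_square_le_1)
    moreover have "0 < 1 + x\<^sup>2" by (simp add: add_pos_nonneg)
    ultimately have "1 \<le> 2 * (1 / (1 + x\<^sup>2))" by (simp add: le_divide_eq)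
    moreover have "exp (- v) \<le> 1" "0 \<le> \<bar>x\<bar> / (1 + v)" using \<open>0 \<le> v\<close> by simp_all
    ultimately show ?thesis by linarith
  qed
  then have "y * exp (- v) \<le> y * (\<bar>x\<bar> / (1 + v) + 2 * (1 / (1 + x\<^sup>2)))"
    using \<open>0 \<le> y\<close> by (rule mult_left_mono)
  then have "y * exp (- v) \<le> y * (\<bar>x\<bar> / (1 + v)) + 2 * y * (1 / (1 + x\<^sup>2))"
    by (simp add: algebra_simps)
  moreover have "\<bar>x\<bar> * exp (- v) \<le> \<bar>x\<bar> / (1 + v)"
    using mult_left_mono[OF e abs_ge_zero] by simp
  ultimately show ?thesis
    unfolding distrib_right by linarith
qed

lemma integral_abs_plus_mult_exp_le:
  fixes t s y D :: real
  assumes "t > 0" "s \<ge> 0" "y \<ge> 0"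
  shows "integral {-s..s} (\<lambda>x. (\<bar>x\<bar> + y) * exp (- (t\<^sup>2 * (x\<^sup>2 - D)\<^sup>2))) \<le> pi * ((1 + y) / t + 2 * y)"
proof -
  define v where "v x = t\<^sup>2 * (x\<^sup>2 - D)\<^sup>2" for x
  define maj where "maj x = (1 + y) * (\<bar>x\<bar> / (1 + v x)) + 2 * y * (1 / (1 + x\<^sup>2))" for x
  have int1: "(\<lambda>x. (1 + y) * (\<bar>x\<bar> / (1 + v x))) integrable_on {-s..s}"
    unfolding v_def using assms by (intro integrable_on_mult_right abs_div_one_plus_square_integral(1))
  have int2: "(\<lambda>x. 2 * y * (1 / (1 + x\<^sup>2))) integrable_on {-s..s}"
    using assms by (intro integrable_on_mult_right inverse_one_plus_square_integral(1))
  have "(\<lambda>x. (\<bar>x\<bar> + y) * exp (- v x)) integrable_on {-s..s}"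
    unfolding v_def by (intro integrable_continuous_interval continuous_intros)
  moreover have "maj integrable_on {-s..s}"
    using integrable_add[OF int1 int2] unfolding maj_def .
  moreover have "(\<bar>x\<bar> + y) * exp (- v x) \<le> maj x" for x
    unfolding maj_def v_def using \<open>y \<ge> 0\<close> by (intro abs_plus_mult_exp_neg_le) auto
  ultimately have "integral {-s..s} (\<lambda>x. (\<bar>x\<bar> + y) * exp (- v x)) \<le> integral {-s..s} maj"
    by (rule integral_le)
  also have "\<dots> = (1 + y) * integral {-s..s} (\<lambda>x. \<bar>x\<bar> / (1 + v x)) + 2 * y * integral {-s..s} (\<lambda>x. 1 / (1 + x\<^sup>2))"
    unfolding maj_def integral_add[OF int1 int2] integral_mult_right ..
  also have "\<dots> \<le> (1 + y) * (pi / t) + 2 * y * pi"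
  proof (rule add_mono[OF mult_left_mono mult_left_mono])
    show "integral {-s..s} (\<lambda>x. \<bar>x\<bar> / (1 + v x)) \<le> pi / t"
      unfolding v_def using assms(1,2) by (rule abs_div_one_plus_square_integral(2))
    show "integral {-s..s} (\<lambda>x. 1 / (1 + x\<^sup>2)) \<le> pi"
      using assms(2) by (rule inverse_one_plus_square_integral(2))
  qed (use assms in auto)
  also have "\<dots> = pi * ((1 + y) / t + 2 * y)"
    by (simp add: field_simps)
  finally show ?thesis unfolding v_def .
qed

section \<open>The Gaussian kernel\<close>

definition gauss_kernel :: "real \<Rightarrow> complex \<Rightarrow> real \<Rightarrow> complex" where
  "gauss_kernel t z \<mu> = exp (- (of_real t)\<^sup>2 * ((1/4 + z\<^sup>2) - of_real \<mu>)\<^sup>2)"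

text \<open>The real part of \<open>(1/4 + z\<^sup>2 - \<mu>)\<^sup>2\<close> at \<open>z = x + iy\<close>.\<close>
definition kernel_exponent :: "real \<Rightarrow> real \<Rightarrow> real \<Rightarrow> real" where
  "kernel_exponent x y \<mu> = (1/4 - \<mu> + x\<^sup>2 - y\<^sup>2)\<^sup>2 - 4 * x\<^sup>2 * y\<^sup>2"

lemma h_t_eq_integral_gauss_kernel:
  "h_t a b t z = of_real (t / sqrt pi) * integral {a..b} (gauss_kernel t z)"
  by (simp add: h_t_def f_t_def gauss_kernel_def[abs_def])

lemma norm_gauss_kernel:
  "norm (gauss_kernel t (of_real x + \<i> * of_real y) \<mu>) = exp (- (t\<^sup>2 * kernel_exponent x y \<mu>))"
proof -
  have "Re (- (of_real t)\<^sup>2 * ((1/4 + (of_real x + \<i> * of_real y)\<^sup>2) - of_real \<mu>)\<^sup>2) = - (t\<^sup>2 * kernel_exponent x y \<mu>)"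
    by (simp add: kernel_exponent_def power2_eq_square algebra_simps)
  then show ?thesis by (simp add: gauss_kernel_def)
qed

lemma continuous_on_gauss_kernel [continuous_intros]:
  "continuous_on S (\<lambda>\<mu>. gauss_kernel t (z \<mu>) \<mu>)" if "continuous_on S z"
  unfolding gauss_kernel_def by (intro continuous_intros that)

lemma kernel_exponent_ge:
  assumes "\<mu> \<le> 1"
  shows "2 * x\<^sup>2 - 3 * (1 + 2 * y\<^sup>2)\<^sup>2 \<le> kernel_exponent x y \<mu>"
proof -
  define S where "S = 1/4 - \<mu> + x\<^sup>2 - y\<^sup>2"
  define K where "K = 1 + 2 * y\<^sup>2"
  have "kernel_exponent x y \<mu> - (2 * x\<^sup>2 - 3 * K\<^sup>2) = (S - K)\<^sup>2 + 2 * K * (1 - \<mu>) + K * (1/2 + 2 * y\<^sup>2)"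
    by (simp add: kernel_exponent_def S_def K_def power2_eq_square field_simps)
  moreover have "0 \<le> 2 * K * (1 - \<mu>) + K * (1/2 + 2 * y\<^sup>2)"
    using assms by (simp add: K_def)
  ultimately have "2 * x\<^sup>2 - 3 * K\<^sup>2 \<le> kernel_exponent x y \<mu>"
    using zero_le_power2[of "S - K"] by linarith
  then show ?thesis by (simp add: K_def)
qed

text \<open>Completing the square in \<open>x\<^sup>2\<close>.\<close>
lemma kernel_exponent_eq_square:
  "kernel_exponent x y \<mu> = (x\<^sup>2 - (3 * y\<^sup>2 - (1/4 - \<mu>)))\<^sup>2 - (8 * y^4 - 4 * (1/4 - \<mu>) * y\<^sup>2)"
  by (simp add: kernel_exponent_def power2_eq_square power4_eq_xxxx algebra_simps)

lemma h_t_holomorphic: "h_t a b t holomorphic_on UNIV"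
proof -
  have "(\<lambda>z. integral (cbox a b) (gauss_kernel t z)) holomorphic_on UNIV"
  proof (rule leibniz_rule_holomorphic)
    show "((\<lambda>z. gauss_kernel t z \<mu>) has_field_derivative
        gauss_kernel t z \<mu> * (- (of_real t)\<^sup>2 * (2 * ((1/4 + z\<^sup>2) - of_real \<mu>) * (2 * z)))) (at z within UNIV)" for z \<mu>
      unfolding gauss_kernel_def by (auto intro!: derivative_eq_intros simp: algebra_simps power2_eq_square)
    show "gauss_kernel t z integrable_on cbox a b" for z
      by (intro integrable_continuous continuous_intros)
    show "continuous_on (UNIV \<times> cbox a b)
        (\<lambda>(z, \<mu>). gauss_kernel t z \<mu> * (- (of_real t)\<^sup>2 * (2 * ((1/4 + z\<^sup>2) - of_real \<mu>) * (2 * z))))"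
      unfolding gauss_kernel_def case_prod_unfold by (intro continuous_intros)
  qed auto
  then show ?thesis
    unfolding h_t_eq_integral_gauss_kernel[abs_def] by (auto intro!: holomorphic_intros)
qed

lemma continuous_on_h_t: "continuous_on S (h_t a b t)"
  using h_t_holomorphic holomorphic_on_imp_continuous_on continuous_on_subset by blast

lemma norm_h_t_le:
  assumes "0 \<le> t"
  shows "norm (h_t a b t (of_real x + \<i> * of_real y))
    \<le> t / sqrt pi * integral {a..b} (\<lambda>\<mu>. exp (- (t\<^sup>2 * kernel_exponent x y \<mu>)))"
proof -
  have "norm (integral {a..b} (gauss_kernel t (of_real x + \<i> * of_real y)))
      \<le> integral {a..b} (\<lambda>\<mu>. exp (- (t\<^sup>2 * kernel_exponent x y \<mu>)))"
  proof (rule integral_norm_bound_integral)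
    show "gauss_kernel t (of_real x + \<i> * of_real y) integrable_on {a..b}"
      by (intro integrable_continuous_interval continuous_intros)
    show "(\<lambda>\<mu>. exp (- (t\<^sup>2 * kernel_exponent x y \<mu>))) integrable_on {a..b}"
      unfolding kernel_exponent_def by (intro integrable_continuous_interval continuous_intros)
  qed (simp add: norm_gauss_kernel)
  then have "t / sqrt pi * norm (integral {a..b} (gauss_kernel t (of_real x + \<i> * of_real y)))
      \<le> t / sqrt pi * integral {a..b} (\<lambda>\<mu>. exp (- (t\<^sup>2 * kernel_exponent x y \<mu>)))"
    using assms by (intro mult_left_mono) auto
  moreover have "norm (h_t a b t (of_real x + \<i> * of_real y))
      = t / sqrt pi * norm (integral {a..b} (gauss_kernel t (of_real x + \<i> * of_real y)))"
    using assms by (simp add: h_t_eq_integral_gauss_kernel norm_mult norm_divide)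
  ultimately show ?thesis by simp
qed

lemma norm_h_t_le_gaussian:
  assumes "0 \<le> a" "a \<le> b" "b \<le> 1" "0 \<le> t" "\<bar>y\<bar> \<le> Y"
  shows "norm (h_t a b t (of_real x + \<i> * of_real y))
    \<le> t / sqrt pi * exp (3 * t\<^sup>2 * (1 + 2 * Y\<^sup>2)\<^sup>2) * exp (- 2 * t\<^sup>2 * x\<^sup>2)"
proof -
  define B where "B = exp (3 * t\<^sup>2 * (1 + 2 * Y\<^sup>2)\<^sup>2) * exp (- 2 * t\<^sup>2 * x\<^sup>2)"
  have "exp (- (t\<^sup>2 * kernel_exponent x y \<mu>)) \<le> B" if "\<mu> \<in> {a..b}" for \<mu>
  proof -
    have "y\<^sup>2 \<le> Y\<^sup>2" using power_mono[OF assms(5) abs_ge_zero, of 2] by simp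
    then have "(1 + 2 * y\<^sup>2)\<^sup>2 \<le> (1 + 2 * Y\<^sup>2)\<^sup>2" by (intro power_mono) auto
    moreover have "\<mu> \<le> 1" using that assms(3) by simp
    ultimately have "2 * x\<^sup>2 - 3 * (1 + 2 * Y\<^sup>2)\<^sup>2 \<le> kernel_exponent x y \<mu>"
      using kernel_exponent_ge[of \<mu> x y] by linarith
    then have "t\<^sup>2 * (2 * x\<^sup>2 - 3 * (1 + 2 * Y\<^sup>2)\<^sup>2) \<le> t\<^sup>2 * kernel_exponent x y \<mu>"
      by (intro mult_left_mono) auto
    then show ?thesis unfolding B_def by (simp add: algebra_simps flip: exp_add)
  qed
  then have "integral {a..b} (\<lambda>\<mu>. exp (- (t\<^sup>2 * kernel_exponent x y \<mu>))) \<le> integral {a..b} (\<lambda>_. B)"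
    unfolding kernel_exponent_def by (intro integral_le integrable_continuous_interval continuous_intros) auto
  also have "\<dots> \<le> B"
    using assms by (simp add: B_def mult_left_le_one_le)
  finally have "t / sqrt pi * integral {a..b} (\<lambda>\<mu>. exp (- (t\<^sup>2 * kernel_exponent x y \<mu>))) \<le> t / sqrt pi * B"
    using assms(4) by (intro mult_left_mono) auto
  with norm_h_t_le[OF assms(4), of a b x y] show ?thesis
    by (simp add: B_def mult.assoc)
qed

section \<open>The derivative of \<open>g_t\<close>\<close>

definition deriv_integrand :: "real \<Rightarrow> real \<Rightarrow> real \<Rightarrow> real \<Rightarrow> complex \<Rightarrow> complex" where
  "deriv_integrand a b t u z = z * h_t a b t z * exp (\<i> * z * of_real u)"

lemma deriv_integrand_holomorphic: "deriv_integrand a b t u holomorphic_on UNIV"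
  unfolding deriv_integrand_def[abs_def] using h_t_holomorphic by (intro holomorphic_intros)

lemma g_t_has_vector_derivative:
  assumes "0 \<le> a" "a \<le> b" "b \<le> 1" "0 < t"
  shows "(g_t a b t has_vector_derivative
           \<i> / (2 * pi) * integral UNIV (\<lambda>x. deriv_integrand a b t u (of_real x))) (at u)"
proof -
  define C where "C = t / sqrt pi * exp (3 * t\<^sup>2)"
  define w where "w r = C * (exp (- (2 * t\<^sup>2) * r\<^sup>2) * \<bar>r\<bar> ^ 0 + exp (- (2 * t\<^sup>2) * r\<^sup>2) * \<bar>r\<bar> ^ 1)" for r
  have "C \<ge> 0" using assms by (simp add: C_def)
  have H: "norm (h_t a b t (of_real r)) \<le> C * exp (- (2 * t\<^sup>2) * r\<^sup>2)" for r
    using norm_h_t_le_gaussian[OF assms(1-3), of t 0 0 r] assms by (simp add: C_def)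
  have "((\<lambda>v. integral UNIV (\<lambda>r. h_t a b t (of_real r) * exp (\<i> * of_real (r * v)))) has_vector_derivative
          integral UNIV (\<lambda>r. h_t a b t (of_real r) * (\<i> * of_real r) * exp (\<i> * of_real (r * u)))) (at u)"
  proof (rule has_vector_derivative_fourier_integral)
    show "continuous_on UNIV (\<lambda>r. h_t a b t (of_real r))"
      by (intro continuous_on_compose2[OF continuous_on_h_t] continuous_intros) auto
    show "norm (h_t a b t (of_real r)) \<le> w r" for r
    proof -
      have "C * exp (- (2 * t\<^sup>2) * r\<^sup>2) \<le> w r"
        unfolding w_def using \<open>C \<ge> 0\<close> by (simp add: distrib_left)
      with H[of r] show ?thesis by linarith
    qed
    show "\<bar>r\<bar> * norm (h_t a b t (of_real r)) \<le> w r" for r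
    proof -
      have "\<bar>r\<bar> * (C * exp (- (2 * t\<^sup>2) * r\<^sup>2)) \<le> w r"
        unfolding w_def using \<open>C \<ge> 0\<close> by (simp add: distrib_left mult_ac)
      with mult_left_mono[OF H[of r] abs_ge_zero[of r]] show ?thesis by linarith
    qed
    show "w integrable_on UNIV"
      unfolding w_def using assms
      by (intro integrable_on_mult_right integrable_add gaussian_moment_integrable_on) auto
  qed
  moreover have "(\<lambda>r. h_t a b t (of_real r) * (\<i> * of_real r) * exp (\<i> * of_real (r * u)))
      = (\<lambda>r. \<i> * deriv_integrand a b t u (of_real r))"
    by (auto simp: deriv_integrand_def mult_ac)
  ultimately have "((\<lambda>v. of_real (1 / (2 * pi)) * integral UNIV (\<lambda>r. h_t a b t (of_real r) * exp (\<i> * of_real (r * v))))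
      has_vector_derivative of_real (1 / (2 * pi)) * (\<i> * integral UNIV (\<lambda>x. deriv_integrand a b t u (of_real x)))) (at u)"
    by (intro has_vector_derivative_mult_right) simp
  then show ?thesis
    unfolding g_t_def[abs_def] by (simp add: mult_ac)
qed

section \<open>Bounds on horizontal lines\<close>

lemma norm_deriv_integrand_le_gaussian:
  assumes "0 \<le> a" "a \<le> b" "b \<le> 1" "0 \<le> t" "\<bar>v\<bar> \<le> Y" "0 \<le> v * u"
  shows "norm (deriv_integrand a b t u (of_real x + \<i> * of_real v))
    \<le> (\<bar>x\<bar> + Y) * (t / sqrt pi * exp (3 * t\<^sup>2 * (1 + 2 * Y\<^sup>2)\<^sup>2)) * exp (- 2 * t\<^sup>2 * x\<^sup>2)"
proof -
  have "norm (of_real x + \<i> * of_real v) \<le> \<bar>x\<bar> + Y"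
    using norm_triangle_ineq[of "of_real x" "\<i> * of_real v"] assms(5) by (simp add: norm_mult)
  moreover have "norm (exp (\<i> * (of_real x + \<i> * of_real v) * of_real u)) \<le> 1"
    using assms(6) by simp
  ultimately have "norm (deriv_integrand a b t u (of_real x + \<i> * of_real v))
      \<le> (\<bar>x\<bar> + Y) * (t / sqrt pi * exp (3 * t\<^sup>2 * (1 + 2 * Y\<^sup>2)\<^sup>2) * exp (- 2 * t\<^sup>2 * x\<^sup>2)) * 1"
    unfolding deriv_integrand_def norm_mult using norm_h_t_le_gaussian[OF assms(1-5)] assms(4,5)
    by (intro mult_mono) auto
  then show ?thesis by (simp add: mult_ac)
qed

lemma norm_deriv_integrand_le:
  assumes "0 \<le> t" "0 \<le> y"
  shows "norm (deriv_integrand a b t u (of_real x + \<i> * of_real y))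
    \<le> t / sqrt pi * exp (- (y * u)) *
       ((\<bar>x\<bar> + y) * integral {a..b} (\<lambda>\<mu>. exp (- (t\<^sup>2 * kernel_exponent x y \<mu>))))"
proof -
  have "norm (of_real x + \<i> * of_real y) \<le> \<bar>x\<bar> + y"
    using norm_triangle_ineq[of "of_real x" "\<i> * of_real y"] assms(2) by (simp add: norm_mult)
  moreover have exp_factor: "norm (exp (\<i> * (of_real x + \<i> * of_real y) * of_real u)) = exp (- (y * u))"
    by simp
  ultimately have "norm (deriv_integrand a b t u (of_real x + \<i> * of_real y))
      \<le> (\<bar>x\<bar> + y) * norm (h_t a b t (of_real x + \<i> * of_real y)) * exp (- (y * u))"
    unfolding deriv_integrand_def norm_mult exp_factor by (intro mult_right_mono) auto
  also have "\<dots> \<le> (\<bar>x\<bar> + y) * (t / sqrt pi * integral {a..b} (\<lambda>\<mu>. exp (- (t\<^sup>2 * kernel_exponent x y \<mu>)))) * exp (- (y * u))"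
    using norm_h_t_le[OF assms(1)] assms(2) by (intro mult_right_mono mult_left_mono) auto
  finally show ?thesis by (simp only: mult_ac)
qed

lemma integral_abs_plus_mult_exp_kernel_le:
  assumes "0 < t" "0 \<le> y" "0 \<le> s" and D: "\<And>x. (x\<^sup>2 - D)\<^sup>2 - R \<le> kernel_exponent x y \<mu>"
  shows "integral {-s..s} (\<lambda>x. (\<bar>x\<bar> + y) * exp (- (t\<^sup>2 * kernel_exponent x y \<mu>)))
    \<le> exp (t\<^sup>2 * R) * (pi * ((1 + y) / t + 2 * y))"
proof -
  have "(\<bar>x\<bar> + y) * exp (- (t\<^sup>2 * kernel_exponent x y \<mu>))
      \<le> exp (t\<^sup>2 * R) * ((\<bar>x\<bar> + y) * exp (- (t\<^sup>2 * (x\<^sup>2 - D)\<^sup>2)))" for x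
  proof -
    have "t\<^sup>2 * ((x\<^sup>2 - D)\<^sup>2 - R) \<le> t\<^sup>2 * kernel_exponent x y \<mu>"
      using D[of x] by (intro mult_left_mono) auto
    then have "exp (- (t\<^sup>2 * kernel_exponent x y \<mu>)) \<le> exp (t\<^sup>2 * R) * exp (- (t\<^sup>2 * (x\<^sup>2 - D)\<^sup>2))"
      by (simp add: algebra_simps flip: exp_add)
    then show ?thesis
      using assms(2) by (simp add: mult_left_mono mult.left_commute)
  qed
  then have "integral {-s..s} (\<lambda>x. (\<bar>x\<bar> + y) * exp (- (t\<^sup>2 * kernel_exponent x y \<mu>)))
      \<le> integral {-s..s} (\<lambda>x. exp (t\<^sup>2 * R) * ((\<bar>x\<bar> + y) * exp (- (t\<^sup>2 * (x\<^sup>2 - D)\<^sup>2))))"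
    unfolding kernel_exponent_def by (intro integral_le integrable_continuous_interval continuous_intros) auto
  also have "\<dots> \<le> exp (t\<^sup>2 * R) * (pi * ((1 + y) / t + 2 * y))"
    using integral_abs_plus_mult_exp_le[OF assms(1,3,2)] by (simp add: mult_left_mono)
  finally show ?thesis .
qed

lemma norm_integral_deriv_integrand_shifted_le:
  assumes "0 < t" "0 \<le> y" "0 \<le> s" and R: "continuous_on {a..b} R"
    and D: "\<And>\<mu>. \<mu> \<in> {a..b} \<Longrightarrow> \<exists>D. \<forall>x. (x\<^sup>2 - D)\<^sup>2 - R \<mu> \<le> kernel_exponent x y \<mu>"
  shows "norm (integral {-s..s} (\<lambda>x. deriv_integrand a b t u (of_real x + \<i> * of_real y)))
    \<le> t / sqrt pi * exp (- (y * u)) * (pi * ((1 + y) / t + 2 * y)) * integral {a..b} (\<lambda>\<mu>. exp (t\<^sup>2 * R \<mu>))"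
proof -
  define c where "c = t / sqrt pi * exp (- (y * u))"
  define W where "W = pi * ((1 + y) / t + 2 * y)"
  define E where "E x \<mu> = (\<bar>x\<bar> + y) * exp (- (t\<^sup>2 * kernel_exponent x y \<mu>))" for x \<mu>
  have E: "continuous_on S (\<lambda>(x, \<mu>). E x \<mu>)" "continuous_on S (\<lambda>(\<mu>, x). E x \<mu>)" for S
    unfolding E_def kernel_exponent_def case_prod_unfold by (intro continuous_intros)+
  have "norm (integral {-s..s} (\<lambda>x. deriv_integrand a b t u (of_real x + \<i> * of_real y)))
      \<le> integral {-s..s} (\<lambda>x. c * integral {a..b} (E x))"
  proof (rule integral_norm_bound_integral)
    have "continuous_on UNIV (deriv_integrand a b t u)"
      using deriv_integrand_holomorphic holomorphic_on_imp_continuous_on by blast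
    then show "(\<lambda>x. deriv_integrand a b t u (of_real x + \<i> * of_real y)) integrable_on {-s..s}"
      by (intro integrable_continuous_interval continuous_on_compose2[OF \<open>continuous_on UNIV (deriv_integrand a b t u)\<close>]
            continuous_intros) auto
    have cont: "continuous_on UNIV (\<lambda>x. integral {a..b} (E x))"
      using integral_continuous_on_param[OF E(1)[of "UNIV \<times> cbox a b"]] by simp
    show "(\<lambda>x. c * integral {a..b} (E x)) integrable_on {-s..s}"
      by (intro integrable_continuous_interval continuous_intros continuous_on_subset[OF cont]) auto
    show "norm (deriv_integrand a b t u (of_real x + \<i> * of_real y)) \<le> c * integral {a..b} (E x)" for x
      using norm_deriv_integrand_le[of t y a b u x] assms by (simp add: c_def E_def[abs_def])
  qed
  also have "\<dots> = c * integral {a..b} (\<lambda>\<mu>. integral {-s..s} (\<lambda>x. E x \<mu>))"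
    using integral_swap_continuous[OF E(1)[of "cbox (-s, a) (s, b)"]] by simp
  also have "\<dots> \<le> c * integral {a..b} (\<lambda>\<mu>. W * exp (t\<^sup>2 * R \<mu>))"
  proof (intro mult_left_mono integral_le)
    have cont: "continuous_on UNIV (\<lambda>\<mu>. integral {-s..s} (\<lambda>x. E x \<mu>))"
      using integral_continuous_on_param[OF E(2)[of "UNIV \<times> cbox (-s) s"]] by simp
    show "(\<lambda>\<mu>. integral {-s..s} (\<lambda>x. E x \<mu>)) integrable_on {a..b}"
      by (intro integrable_continuous_interval continuous_on_subset[OF cont]) auto
    show "(\<lambda>\<mu>. W * exp (t\<^sup>2 * R \<mu>)) integrable_on {a..b}"
      by (intro integrable_continuous_interval continuous_intros R)
    show "integral {-s..s} (\<lambda>x. E x \<mu>) \<le> W * exp (t\<^sup>2 * R \<mu>)" if \<mu>: "\<mu> \<in> {a..b}" for \<mu>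
    proof -
      obtain D where "\<forall>x. (x\<^sup>2 - D)\<^sup>2 - R \<mu> \<le> kernel_exponent x y \<mu>"
        using D[OF \<mu>] by blast
      then have "integral {-s..s} (\<lambda>x. E x \<mu>) \<le> exp (t\<^sup>2 * R \<mu>) * W"
        unfolding E_def W_def by (intro integral_abs_plus_mult_exp_kernel_le[OF assms(1-3)]) auto
      then show ?thesis by (simp only: mult.commute)
    qed
  qed (use assms in \<open>auto simp: c_def\<close>)
  finally show ?thesis by (simp add: c_def W_def mult_ac)
qed

lemma norm_integral_deriv_integrand_le:
  assumes "0 \<le> a" "a \<le> b" "b \<le> 1" "0 < t" "0 \<le> y" "0 \<le> u" and R: "continuous_on {a..b} R"
    and D: "\<And>\<mu>. \<mu> \<in> {a..b} \<Longrightarrow> \<exists>D. \<forall>x. (x\<^sup>2 - D)\<^sup>2 - R \<mu> \<le> kernel_exponent x y \<mu>"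
  shows "norm (integral UNIV (\<lambda>x. deriv_integrand a b t u (of_real x)))
    \<le> t / sqrt pi * exp (- (y * u)) * (pi * ((1 + y) / t + 2 * y)) * integral {a..b} (\<lambda>\<mu>. exp (t\<^sup>2 * R \<mu>))"
proof (rule norm_integral_real_line_le_shifted[OF deriv_integrand_holomorphic \<open>0 \<le> y\<close>])
  define K where "K Y = t / sqrt pi * exp (3 * t\<^sup>2 * (1 + 2 * Y\<^sup>2)\<^sup>2)" for Y
  show "norm (deriv_integrand a b t u (of_real x)) \<le> K 0 * (exp (- (2 * t\<^sup>2) * x\<^sup>2) * \<bar>x\<bar> ^ 1)" for x
    using norm_deriv_integrand_le_gaussian[OF assms(1-3), of t 0 0 u x] assms(4)
    by (simp add: K_def mult_ac)
  show "(\<lambda>x. K 0 * (exp (- (2 * t\<^sup>2) * x\<^sup>2) * \<bar>x\<bar> ^ 1)) integrable_on UNIV"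
    using assms(4) by (intro integrable_on_mult_right gaussian_moment_integrable_on) auto
  show "norm (deriv_integrand a b t u (of_real x + \<i> * of_real v)) \<le> (\<bar>x\<bar> + y) * K y * exp (- 2 * t\<^sup>2 * \<bar>x\<bar>\<^sup>2)"
    if "v \<in> {0..y}" for x v
    using norm_deriv_integrand_le_gaussian[OF assms(1-3), of t v y u x] that assms(4,6)
    by (simp add: K_def)
  show "((\<lambda>s. (s + y) * K y * exp (- 2 * t\<^sup>2 * s\<^sup>2)) \<longlongrightarrow> 0) at_top"
    using assms(4) unfolding K_def by real_asymp
  show "norm (integral {-s..s} (\<lambda>x. deriv_integrand a b t u (of_real x + \<i> * of_real y)))
    \<le> t / sqrt pi * exp (- (y * u)) * (pi * ((1 + y) / t + 2 * y)) * integral {a..b} (\<lambda>\<mu>. exp (t\<^sup>2 * R \<mu>))"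
    if "0 \<le> s" for s
    using norm_integral_deriv_integrand_shifted_le[OF assms(4,5) that R D] .
qed

section \<open>The regimes \<open>b \<ge> 1/4\<close> and \<open>b < 1/4\<close>\<close>

lemma t_div_sqrt_pi_mult:
  fixes t y :: real
  assumes "0 < t"
  shows "t / sqrt pi * (pi * ((1 + y) / t + 2 * y)) = sqrt pi * (1 + y + 2 * t * y)"
proof -
  have "t / sqrt pi * pi = t * sqrt pi"
    using real_div_sqrt[of pi] by (simp add: field_simps)
  then show ?thesis
    using assms by (simp add: field_simps)
qed

lemma integral_exp_mult_le:
  fixes k a b :: real
  assumes "0 < k" "a \<le> b"
  shows "integral {a..b} (\<lambda>\<mu>. exp (k * \<mu>)) \<le> (b - a) * exp (k * b)"
    and "integral {a..b} (\<lambda>\<mu>. exp (k * \<mu>)) \<le> exp (k * b) / k"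
proof -
  have "integral {a..b} (\<lambda>\<mu>. exp (k * \<mu>)) \<le> integral {a..b} (\<lambda>\<mu>. exp (k * b))"
    using assms by (intro integral_le integrable_continuous_interval continuous_intros) auto
  then show "integral {a..b} (\<lambda>\<mu>. exp (k * \<mu>)) \<le> (b - a) * exp (k * b)"
    using assms by simp
  have "((\<lambda>\<mu>. exp (k * \<mu>)) has_integral exp (k * b) / k - exp (k * a) / k) {a..b}"
  proof (rule fundamental_theorem_of_calculus[OF \<open>a \<le> b\<close>])
    show "((\<lambda>\<mu>. exp (k * \<mu>) / k) has_vector_derivative exp (k * x)) (at x within {a..b})" for x
      using \<open>0 < k\<close>
      by (auto intro!: derivative_eq_intros simp: has_real_derivative_iff_has_vector_derivative[symmetric])
  qed
  then show "integral {a..b} (\<lambda>\<mu>. exp (k * \<mu>)) \<le> exp (k * b) / k"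
    using \<open>0 < k\<close> by (simp add: integral_unique)
qed

lemma integral_exp_kernel_remainder_le:
  fixes a b t y :: real
  assumes "0 \<le> a" "a \<le> b" "b \<le> 1" "0 < t" "0 < y"
  shows "integral {a..b} (\<lambda>\<mu>. exp (t\<^sup>2 * (8 * y^4 - 4 * (1/4 - \<mu>) * y\<^sup>2)))
      \<le> exp (t\<^sup>2 * (8 * y^4 + 3 * y\<^sup>2))"
    and "integral {a..b} (\<lambda>\<mu>. exp (t\<^sup>2 * (8 * y^4 - 4 * (1/4 - \<mu>) * y\<^sup>2)))
      \<le> exp (t\<^sup>2 * (8 * y^4 + 3 * y\<^sup>2)) / (4 * t\<^sup>2 * y\<^sup>2)"
proof -
  define k where "k = 4 * t\<^sup>2 * y\<^sup>2"
  define c where "c = exp (t\<^sup>2 * (8 * y^4 + 3 * y\<^sup>2) - k)"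
  have "0 < k" using assms by (simp add: k_def)
  have "(\<lambda>\<mu>. exp (t\<^sup>2 * (8 * y^4 - 4 * (1/4 - \<mu>) * y\<^sup>2))) = (\<lambda>\<mu>. c * exp (k * \<mu>))"
    unfolding c_def k_def by (rule ext, simp flip: exp_add) (simp add: algebra_simps)
  then have I: "integral {a..b} (\<lambda>\<mu>. exp (t\<^sup>2 * (8 * y^4 - 4 * (1/4 - \<mu>) * y\<^sup>2)))
      = c * integral {a..b} (\<lambda>\<mu>. exp (k * \<mu>))"
    by simp
  have cb: "c * exp (k * b) \<le> exp (t\<^sup>2 * (8 * y^4 + 3 * y\<^sup>2))"
    using \<open>0 < k\<close> assms(3) unfolding c_def by (simp flip: exp_add)
  have "c * integral {a..b} (\<lambda>\<mu>. exp (k * \<mu>)) \<le> c * ((b - a) * exp (k * b))"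
    by (rule mult_left_mono[OF integral_exp_mult_le(1)[OF \<open>0 < k\<close> assms(2)]]) (simp add: c_def)
  also have "\<dots> = (b - a) * (c * exp (k * b))" by simp
  also have "\<dots> \<le> 1 * exp (t\<^sup>2 * (8 * y^4 + 3 * y\<^sup>2))"
    using cb assms by (intro mult_mono) (auto simp: c_def)
  finally show "integral {a..b} (\<lambda>\<mu>. exp (t\<^sup>2 * (8 * y^4 - 4 * (1/4 - \<mu>) * y\<^sup>2)))
      \<le> exp (t\<^sup>2 * (8 * y^4 + 3 * y\<^sup>2))"
    unfolding I by simp
  have "c * integral {a..b} (\<lambda>\<mu>. exp (k * \<mu>)) \<le> c * (exp (k * b) / k)"
    by (rule mult_left_mono[OF integral_exp_mult_le(2)[OF \<open>0 < k\<close> assms(2)]]) (simp add: c_def)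
  also have "\<dots> = (c * exp (k * b)) / k" by simp
  also have "\<dots> \<le> exp (t\<^sup>2 * (8 * y^4 + 3 * y\<^sup>2)) / k"
    using cb \<open>0 < k\<close> by (intro divide_right_mono) auto
  finally show "integral {a..b} (\<lambda>\<mu>. exp (t\<^sup>2 * (8 * y^4 - 4 * (1/4 - \<mu>) * y\<^sup>2)))
      \<le> exp (t\<^sup>2 * (8 * y^4 + 3 * y\<^sup>2)) / (4 * t\<^sup>2 * y\<^sup>2)"
    unfolding I k_def .
qed

text \<open>This bound does not use the gap \<open>1/4 - b\<close>; the \<open>\<mu>\<close>-integral contributes either the
  length of \<open>[a, b]\<close> or the factor \<open>1 / (4t\<^sup>2y\<^sup>2)\<close>.\<close>
lemma norm_integral_deriv_integrand_le_no_gap: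
  assumes "0 \<le> a" "a \<le> b" "b \<le> 1" "0 < t" "0 < y" "0 \<le> u"
  shows "norm (integral UNIV (\<lambda>x. deriv_integrand a b t u (of_real x)))
    \<le> sqrt pi * (1 + 1 / (4 * t\<^sup>2 * y) + 1 / (2 * t * y)) * exp (- (y * u) + t\<^sup>2 * (8 * y^4 + 3 * y\<^sup>2))"
proof -
  define X where "X = exp (t\<^sup>2 * (8 * y^4 + 3 * y\<^sup>2))"
  define I where "I = integral {a..b} (\<lambda>\<mu>. exp (t\<^sup>2 * (8 * y^4 - 4 * (1/4 - \<mu>) * y\<^sup>2)))"
  have B: "norm (integral UNIV (\<lambda>x. deriv_integrand a b t u (of_real x)))
      \<le> t / sqrt pi * exp (- (y * u)) * (pi * ((1 + y) / t + 2 * y)) * I"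
    unfolding I_def using assms
    by (intro norm_integral_deriv_integrand_le continuous_intros)
       (auto intro!: exI simp: kernel_exponent_eq_square)
  have "t / sqrt pi * (pi * ((1 + y) / t + 2 * y)) * I = sqrt pi * (I + y * I + 2 * t * y * I)"
    unfolding t_div_sqrt_pi_mult[OF \<open>0 < t\<close>] by (simp add: algebra_simps)
  also have "\<dots> \<le> sqrt pi * (X + y * (X / (4 * t\<^sup>2 * y\<^sup>2)) + 2 * t * y * (X / (4 * t\<^sup>2 * y\<^sup>2)))"
    using integral_exp_kernel_remainder_le[OF assms(1-5)] assms unfolding I_def X_def
    by (intro mult_left_mono add_mono) auto
  also have "\<dots> = sqrt pi * (1 + 1 / (4 * t\<^sup>2 * y) + 1 / (2 * t * y)) * X"
    using assms by (simp add: field_simps power2_eq_square)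
  finally have "exp (- (y * u)) * (t / sqrt pi * (pi * ((1 + y) / t + 2 * y)) * I)
      \<le> exp (- (y * u)) * (sqrt pi * (1 + 1 / (4 * t\<^sup>2 * y) + 1 / (2 * t * y)) * X)"
    by (rule mult_left_mono) simp
  also have "\<dots> = sqrt pi * (1 + 1 / (4 * t\<^sup>2 * y) + 1 / (2 * t * y)) * (exp (- (y * u)) * X)"
    by (simp only: mult_ac)
  also have "exp (- (y * u)) * X = exp (- (y * u) + t\<^sup>2 * (8 * y^4 + 3 * y\<^sup>2))"
    by (simp add: X_def mult_exp_exp)
  finally show ?thesis
    using B by (simp only: mult_ac)
qed

lemma kernel_exponent_ge_gap:
  assumes "0 \<le> \<mu>" "\<mu> \<le> b" "b < 1/4"
  shows "\<exists>D. \<forall>x. (x\<^sup>2 - D)\<^sup>2 - (8 * y^4 + y\<^sup>2 - (1/4 - b)\<^sup>2) \<le> kernel_exponent x y \<mu>"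
proof -
  define A where "A = 1/4 - \<mu>"
  define \<delta> where "\<delta> = 1/4 - b"
  have A: "\<delta> \<le> A" "0 < \<delta>" "A \<le> 1/4" using assms by (auto simp: A_def \<delta>_def)
  then have "\<delta>\<^sup>2 \<le> A\<^sup>2" by (intro power_mono) auto
  have q: "kernel_exponent x y \<mu> = (x\<^sup>2 + (A - 3 * y\<^sup>2))\<^sup>2 - 8 * y^4 + 4 * A * y\<^sup>2" for x
    unfolding kernel_exponent_eq_square A_def by (simp add: algebra_simps)
  show ?thesis
  proof (cases "3 * y\<^sup>2 \<le> A")
    case True
    have "(x\<^sup>2 - 0)\<^sup>2 - (8 * y^4 + y\<^sup>2 - \<delta>\<^sup>2) \<le> kernel_exponent x y \<mu>" for x
    proof -
      have "kernel_exponent x y \<mu> - ((x\<^sup>2 - 0)\<^sup>2 - (8 * y^4 + y\<^sup>2 - \<delta>\<^sup>2))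
          = 2 * x\<^sup>2 * (A - 3 * y\<^sup>2) + (A\<^sup>2 - \<delta>\<^sup>2) + y\<^sup>2 * (1 - 2 * A) + 9 * y^4"
        unfolding q by (simp add: power2_eq_square power4_eq_xxxx algebra_simps)
      moreover have "0 \<le> 2 * x\<^sup>2 * (A - 3 * y\<^sup>2) + (A\<^sup>2 - \<delta>\<^sup>2) + y\<^sup>2 * (1 - 2 * A) + 9 * y^4"
        using True A \<open>\<delta>\<^sup>2 \<le> A\<^sup>2\<close> by (intro add_nonneg_nonneg mult_nonneg_nonneg) auto
      ultimately show ?thesis by linarith
    qed
    then show ?thesis unfolding \<delta>_def by blast
  next
    case False
    have "A\<^sup>2 \<le> A * (3 * y\<^sup>2)"
      using False A by (simp add: power2_eq_square mult_left_mono)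
    also have "\<dots> \<le> 1/4 * (3 * y\<^sup>2)"
      using A by (intro mult_right_mono) auto
    moreover have "0 \<le> A * y\<^sup>2" using A by simp
    ultimately have "\<delta>\<^sup>2 \<le> y\<^sup>2 + 4 * A * y\<^sup>2"
      using \<open>\<delta>\<^sup>2 \<le> A\<^sup>2\<close> by linarith
    then have "(x\<^sup>2 - (3 * y\<^sup>2 - A))\<^sup>2 - (8 * y^4 + y\<^sup>2 - \<delta>\<^sup>2) \<le> kernel_exponent x y \<mu>" for x
      unfolding q by (simp add: algebra_simps)
    then show ?thesis unfolding \<delta>_def by blast
  qed
qed

lemma norm_integral_deriv_integrand_le_gap:
  assumes "0 \<le> a" "a \<le> b" "b < 1/4" "0 < t" "0 < y" "0 \<le> u"
  shows "norm (integral UNIV (\<lambda>x. deriv_integrand a b t u (of_real x)))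
    \<le> sqrt pi * ((1 + y + 2 * t * y) * exp (- 2 * t\<^sup>2 * y\<^sup>2)) *
       exp (- (y * u) + t\<^sup>2 * (8 * y^4 + 3 * y\<^sup>2) - t\<^sup>2 * (1/4 - b)\<^sup>2)"
proof -
  define R where "R = 8 * y^4 + y\<^sup>2 - (1/4 - b)\<^sup>2"
  have "norm (integral UNIV (\<lambda>x. deriv_integrand a b t u (of_real x)))
      \<le> t / sqrt pi * exp (- (y * u)) * (pi * ((1 + y) / t + 2 * y)) * integral {a..b} (\<lambda>_. exp (t\<^sup>2 * R))"
    using assms
    by (intro norm_integral_deriv_integrand_le) (auto simp: R_def intro!: kernel_exponent_ge_gap)
  also have "\<dots> \<le> t / sqrt pi * exp (- (y * u)) * (pi * ((1 + y) / t + 2 * y)) * exp (t\<^sup>2 * R)"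
    using assms by (intro mult_left_mono) (auto simp: mult_left_le_one_le)
  also have "\<dots> = (t / sqrt pi * (pi * ((1 + y) / t + 2 * y))) * (exp (- (y * u)) * exp (t\<^sup>2 * R))"
    by (simp only: mult_ac)
  also have "\<dots> = sqrt pi * (1 + y + 2 * t * y) * (exp (- (y * u)) * exp (t\<^sup>2 * R))"
    unfolding t_div_sqrt_pi_mult[OF \<open>0 < t\<close>] ..
  also have "exp (- (y * u)) * exp (t\<^sup>2 * R)
      = exp (- 2 * t\<^sup>2 * y\<^sup>2) * exp (- (y * u) + t\<^sup>2 * (8 * y^4 + 3 * y\<^sup>2) - t\<^sup>2 * (1/4 - b)\<^sup>2)"
    unfolding R_def by (simp add: algebra_simps flip: exp_add)
  finally show ?thesis by (simp add: mult_ac)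
qed

section \<open>Choice of the line\<close>

lemma cube_root_power: "0 < x \<Longrightarrow> (x powr (1/3)) ^ n = x powr (real n / 3)"
  by (simp add: powr_realpow[symmetric] powr_powr)

lemma cube_root_powers:
  fixes x :: real
  assumes "0 < x"
  shows "x = (x powr (1/3))^3" "x powr (4/3) = (x powr (1/3))^4" "x powr (2/3) = (x powr (1/3))\<^sup>2"
    "x powr (-2/3) = 1 / (x powr (1/3))\<^sup>2"
  using cube_root_power[OF assms, of 3] cube_root_power[OF assms, of 4] cube_root_power[OF assms, of 2] assms
  by (simp_all add: powr_minus_divide)


lemma saddle_point_exponent:
  fixes p \<sigma> :: real
  assumes "0 < \<sigma>"
  defines "y \<equiv> p / (4 * \<sigma>\<^sup>2)"
  shows "- (y * p^3) + (\<sigma>^3)\<^sup>2 * (8 * y^4 + 3 * y\<^sup>2) = - 7/32 * p^4 / \<sigma>\<^sup>2 + 3/16 * p\<^sup>2 * \<sigma>\<^sup>2"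
  using assms unfolding y_def by (simp add: field_simps) algebra

lemma saddle_prefactor_le:
  fixes \<sigma> p \<rho> :: real
  assumes "\<sigma> \<ge> 1/6" "\<rho> \<le> p" "0 < \<rho>" "\<rho> < 2"
  shows "1 + 1 / (\<sigma>^4 * p) + 2 / (\<sigma> * p) \<le> 2620 / \<rho>\<^sup>2"
proof -
  have s0: "\<sigma> > 0" using assms by linarith
  have p0: "p > 0" using assms by linarith
  have "(1/6)^4 \<le> \<sigma>^4" using assms by (intro power_mono) auto
  then have s4: "1 / \<sigma>^4 \<le> 1296" using s0 by (simp add: field_simps)
  have s1: "1 / \<sigma> \<le> 6" using assms s0 by (simp add: field_simps)
  have pr: "1 / p \<le> 1 / \<rho>" using assms by (intro divide_left_mono) auto
  have "1 / (\<sigma>^4 * p) = (1 / \<sigma>^4) * (1 / p)" by simp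
  also have "\<dots> \<le> 1296 * (1 / \<rho>)" using s4 pr p0 s0 by (intro mult_mono) auto
  finally have a1: "1 / (\<sigma>^4 * p) \<le> 1296 * (1 / \<rho>)" .
  have "2 / (\<sigma> * p) = 2 * ((1 / \<sigma>) * (1 / p))" by simp
  also have "\<dots> \<le> 2 * (6 * (1 / \<rho>))" using s1 pr p0 s0 by (intro mult_left_mono mult_mono) auto
  finally have a2: "2 / (\<sigma> * p) \<le> 12 * (1 / \<rho>)" by simp
  have r1: "1 / \<rho> \<le> 2 / \<rho>\<^sup>2" using assms by (simp add: field_simps power2_eq_square)
  have r0: "1 \<le> 4 / \<rho>\<^sup>2"
  proof -
    have "\<rho>\<^sup>2 \<le> 2\<^sup>2" using assms by (intro power_mono) auto
    then show ?thesis using assms by (simp add: field_simps)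
  qed
  have "1 + 1 / (\<sigma>^4 * p) + 2 / (\<sigma> * p) \<le> 1 + 1308 * (1 / \<rho>)" using a1 a2 by linarith
  also have "\<dots> \<le> 4 / \<rho>\<^sup>2 + 1308 * (2 / \<rho>\<^sup>2)" using r0 r1 by linarith
  also have "\<dots> = 2620 / \<rho>\<^sup>2" by simp
  finally show ?thesis .
qed

lemma gaussian_prefactor_le:
  fixes t y :: real
  assumes "1/200 \<le> t" "0 \<le> y"
  shows "(1 + y + 2 * t * y) * exp (- 2 * t\<^sup>2 * y\<^sup>2) \<le> 203"
proof -
  define z where "z = t * y"
  have "0 \<le> z" using assms by (simp add: z_def)
  have "1 * y \<le> (200 * t) * y" using assms by (intro mult_right_mono) auto
  then have "y \<le> 200 * z" by (simp add: z_def)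
  have e: "exp (- 2 * t\<^sup>2 * y\<^sup>2) = exp (- (2 * z\<^sup>2))" by (simp add: z_def power_mult_distrib)
  have "(z - 1/2)\<^sup>2 = z\<^sup>2 - z + 1/4" by (simp add: power2_eq_square algebra_simps)
  then have "z \<le> 1 + 2 * z\<^sup>2" using zero_le_power2[of "z - 1/2"] zero_le_power2[of z] by linarith
  then have "z \<le> exp (2 * z\<^sup>2)"
    using exp_ge_add_one_self[of "2 * z\<^sup>2"] by linarith
  then have "z * exp (- (2 * z\<^sup>2)) \<le> 1"
    by (simp add: exp_minus field_simps)
  have "(1 + y + 2 * t * y) * exp (- (2 * z\<^sup>2)) \<le> (1 + 202 * z) * exp (- (2 * z\<^sup>2))"
    using \<open>y \<le> 200 * z\<close> by (intro mult_right_mono) (auto simp: z_def)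
  also have "\<dots> = exp (- (2 * z\<^sup>2)) + 202 * (z * exp (- (2 * z\<^sup>2)))"
    by (simp add: algebra_simps)
  also have "\<dots> \<le> 203"
  proof -
    have "exp (- (2 * z\<^sup>2)) \<le> 1" by simp
    with \<open>z * exp (- (2 * z\<^sup>2)) \<le> 1\<close> show ?thesis by linarith
  qed
  finally show ?thesis unfolding e .
qed

text \<open>The choice \<open>y = u powr (1/3) / (4 t powr (2/3))\<close> balances \<open>exp (- y u)\<close> against
  \<open>exp (8 t\<^sup>2 y\<^sup>4)\<close>; in the cube roots \<open>p\<close>, \<open>\<sigma>\<close>, \<open>\<rho>\<close> of \<open>u\<close>, \<open>t\<close>, \<open>r\<close> all quantities
  become rational.\<close>
lemma saddle_point:
  fixes r u t :: real
  assumes "0 < r" "r < 3" "r \<le> u" "1/200 \<le> t"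
  defines "y \<equiv> u powr (1/3) / (4 * t powr (2/3))"
  shows "0 < y"
    and "- (y * u) + t\<^sup>2 * (8 * y^4 + 3 * y\<^sup>2)
      = - 7/32 * u powr (4/3) * t powr (-2/3) + 3/16 * u powr (2/3) * t powr (2/3)"
    and "1 + 1 / (4 * t\<^sup>2 * y) + 1 / (2 * t * y) \<le> 2620 * r powr (-2/3)"
    and "203 \<le> 2620 * r powr (-2/3)"
proof -
  have "0 < t" "0 < u" using assms by linarith+
  define p \<sigma> \<rho> where "p = u powr (1/3)" and "\<sigma> = t powr (1/3)" and "\<rho> = r powr (1/3)"
  have pos: "0 < p" "0 < \<sigma>" "0 < \<rho>"
    using \<open>0 < t\<close> \<open>0 < u\<close> \<open>0 < r\<close> by (simp_all add: p_def \<sigma>_def \<rho>_def)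
  note pu = cube_root_powers[OF \<open>0 < u\<close>, folded p_def]
  note pt = cube_root_powers[OF \<open>0 < t\<close>, folded \<sigma>_def]
  note pr = cube_root_powers[OF \<open>0 < r\<close>, folded \<rho>_def]
  have y: "y = p / (4 * \<sigma>\<^sup>2)"
    unfolding y_def p_def pt(3) ..
  have "\<rho> \<le> p" unfolding \<rho>_def p_def using assms by (intro powr_mono2) auto
  have "\<rho> ^ 3 < 2 ^ 3"
    using \<open>r < 3\<close> pr(1) by simp
  then have "\<rho> < 2"
    by (rule power_less_imp_less_base) simp
  have "1/6 \<le> \<sigma>"
  proof (rule ccontr)
    assume "\<not> 1/6 \<le> \<sigma>"
    then have "\<sigma>^3 < (1/6)^3" using pos by (intro power_strict_mono) auto
    moreover have "(1/6::real)^3 = 1/216" by (simp add: power3_eq_cube)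
    ultimately show False using \<open>1/200 \<le> t\<close> pt(1) by linarith
  qed
  show "0 < y" using pos by (simp add: y)
  show "- (y * u) + t\<^sup>2 * (8 * y^4 + 3 * y\<^sup>2)
      = - 7/32 * u powr (4/3) * t powr (-2/3) + 3/16 * u powr (2/3) * t powr (2/3)"
    unfolding pu(2,3) pt(3,4) y using saddle_point_exponent[OF pos(2), of p] pu(1) pt(1) by simp
  have "1 + 1 / (4 * t\<^sup>2 * y) + 1 / (2 * t * y) = 1 + 1 / (\<sigma>^4 * p) + 2 / (\<sigma> * p)"
    unfolding y using pos pt(1) by (simp add: field_simps) (simp flip: power_Suc)
  also have "\<dots> \<le> 2620 * r powr (-2/3)"
    using saddle_prefactor_le[OF \<open>1/6 \<le> \<sigma>\<close> \<open>\<rho> \<le> p\<close> pos(3) \<open>\<rho> < 2\<close>] unfolding pr(4) by simp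
  finally show "1 + 1 / (4 * t\<^sup>2 * y) + 1 / (2 * t * y) \<le> 2620 * r powr (-2/3)" .
  have "\<rho>\<^sup>2 \<le> 2\<^sup>2" using pos \<open>\<rho> < 2\<close> by (intro power_mono) auto
  then show "203 \<le> 2620 * r powr (-2/3)" unfolding pr(4) using pos by (simp add: field_simps)
qed

lemma norm_integral_deriv_integrand_bound:
  assumes "0 \<le> a" "a \<le> b" "b \<le> 1" "0 < r" "r < 3" "r \<le> u" "1/200 \<le> t"
  shows "norm (integral UNIV (\<lambda>x. deriv_integrand a b t u (of_real x)))
    \<le> sqrt pi * (2620 * r powr (-2/3)) *
       exp (- t\<^sup>2 * (delta_b b)\<^sup>2 - 7/32 * u powr (4/3) * t powr (-2/3) + 3/16 * u powr (2/3) * t powr (2/3))"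
proof -
  define y where "y = u powr (1/3) / (4 * t powr (2/3))"
  note y = saddle_point[OF assms(4-7), folded y_def]
  have "0 < t" "0 \<le> u" using assms by linarith+
  show ?thesis
  proof (cases "b < 1/4")
    case True
    then have "delta_b b = 1/4 - b" by (simp add: delta_b_def)
    have "(1 + y + 2 * t * y) * exp (- 2 * t\<^sup>2 * y\<^sup>2) \<le> 2620 * r powr (-2/3)"
      using gaussian_prefactor_le[OF \<open>1/200 \<le> t\<close>, of y] y(1,4) by linarith
    then have "sqrt pi * ((1 + y + 2 * t * y) * exp (- 2 * t\<^sup>2 * y\<^sup>2)) *
          exp (- (y * u) + t\<^sup>2 * (8 * y^4 + 3 * y\<^sup>2) - t\<^sup>2 * (1/4 - b)\<^sup>2)
        \<le> sqrt pi * (2620 * r powr (-2/3)) * exp (- (y * u) + t\<^sup>2 * (8 * y^4 + 3 * y\<^sup>2) - t\<^sup>2 * (1/4 - b)\<^sup>2)"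
      by (intro mult_right_mono mult_left_mono) auto
    with norm_integral_deriv_integrand_le_gap[OF assms(1,2) True \<open>0 < t\<close> y(1) \<open>0 \<le> u\<close>]
    have "norm (integral UNIV (\<lambda>x. deriv_integrand a b t u (of_real x)))
        \<le> sqrt pi * (2620 * r powr (-2/3)) * exp (- (y * u) + t\<^sup>2 * (8 * y^4 + 3 * y\<^sup>2) - t\<^sup>2 * (1/4 - b)\<^sup>2)"
      by linarith
    also have "- (y * u) + t\<^sup>2 * (8 * y^4 + 3 * y\<^sup>2) - t\<^sup>2 * (1/4 - b)\<^sup>2
        = - t\<^sup>2 * (delta_b b)\<^sup>2 - 7/32 * u powr (4/3) * t powr (-2/3) + 3/16 * u powr (2/3) * t powr (2/3)"
      unfolding \<open>delta_b b = 1/4 - b\<close> using y(2) by linarith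
    finally show ?thesis .
  next
    case False
    then have "delta_b b = 0" by (simp add: delta_b_def)
    have "sqrt pi * (1 + 1 / (4 * t\<^sup>2 * y) + 1 / (2 * t * y)) * exp (- (y * u) + t\<^sup>2 * (8 * y^4 + 3 * y\<^sup>2))
        \<le> sqrt pi * (2620 * r powr (-2/3)) * exp (- (y * u) + t\<^sup>2 * (8 * y^4 + 3 * y\<^sup>2))"
      using y(3) by (intro mult_right_mono mult_left_mono) auto
    with norm_integral_deriv_integrand_le_no_gap[OF assms(1-3) \<open>0 < t\<close> y(1) \<open>0 \<le> u\<close>]
    have "norm (integral UNIV (\<lambda>x. deriv_integrand a b t u (of_real x)))
        \<le> sqrt pi * (2620 * r powr (-2/3)) * exp (- (y * u) + t\<^sup>2 * (8 * y^4 + 3 * y\<^sup>2))"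
      by linarith
    also have "- (y * u) + t\<^sup>2 * (8 * y^4 + 3 * y\<^sup>2)
        = - t\<^sup>2 * (delta_b b)\<^sup>2 - 7/32 * u powr (4/3) * t powr (-2/3) + 3/16 * u powr (2/3) * t powr (2/3)"
      unfolding \<open>delta_b b = 0\<close> using y(2) by simp
    finally show ?thesis .
  qed
qed

lemma sqrt_pi_div_two_pi_le_one: "sqrt pi / (2 * pi) \<le> 1"
proof -
  have "sqrt pi \<le> sqrt 4" using pi_less_4 by (intro real_sqrt_le_mono) simp
  also have "\<dots> \<le> 2 * pi" using pi_gt3 by simp
  finally show ?thesis by simp
qed

theorem lemma3p5:
  shows "\<exists>C::real. \<forall>a b r u t::real.
    0 \<le> a \<and> a \<le> b \<and> b \<le> 1 \<and> 0 < r \<and> r < 3 \<and> u \<ge> r \<and> t \<ge> 1/200 \<longrightarrow>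
      (g_t a b t) differentiable (at u) \<and>
      norm (vector_derivative (g_t a b t) (at u)) \<le>
        C * r powr (-2/3) *
          exp (- t\<^sup>2 * (delta_b b)\<^sup>2 - 7/32 * u powr (4/3) * t powr (-2/3)
               + 3/16 * u powr (2/3) * t powr (2/3))"
proof (intro exI[of _ 2620] allI impI)
  fix a b r u t :: real
  assume "0 \<le> a \<and> a \<le> b \<and> b \<le> 1 \<and> 0 < r \<and> r < 3 \<and> u \<ge> r \<and> t \<ge> 1/200"
  then have ab: "0 \<le> a" "a \<le> b" "b \<le> 1" and r: "0 < r" "r < 3" "r \<le> u" and t: "1/200 \<le> t"
    by auto
  define E where "E = exp (- t\<^sup>2 * (delta_b b)\<^sup>2 - 7/32 * u powr (4/3) * t powr (-2/3) + 3/16 * u powr (2/3) * t powr (2/3))"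
  define I where "I = integral UNIV (\<lambda>x. deriv_integrand a b t u (of_real x))"
  have deriv: "(g_t a b t has_vector_derivative \<i> / (2 * pi) * I) (at u)"
    unfolding I_def using ab t by (intro g_t_has_vector_derivative) auto
  have "norm I \<le> sqrt pi * (2620 * r powr (-2/3)) * E"
    unfolding I_def E_def by (rule norm_integral_deriv_integrand_bound[OF ab r t])
  have "norm (\<i> / (2 * pi) * I) = norm I / (2 * pi)"
    by (simp add: norm_mult norm_divide)
  also have "\<dots> \<le> sqrt pi * (2620 * r powr (-2/3)) * E / (2 * pi)"
    using \<open>norm I \<le> sqrt pi * (2620 * r powr (-2/3)) * E\<close> by (rule divide_right_mono) simp
  also have "\<dots> = sqrt pi / (2 * pi) * (2620 * r powr (-2/3) * E)"
    by simp
  also have "\<dots> \<le> 1 * (2620 * r powr (-2/3) * E)"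
    using sqrt_pi_div_two_pi_le_one by (intro mult_right_mono) (auto simp: E_def)
  finally have "norm (\<i> / (2 * pi) * I) \<le> 2620 * r powr (-2/3) * E"
    by simp
  then show "g_t a b t differentiable (at u) \<and>
      norm (vector_derivative (g_t a b t) (at u)) \<le> 2620 * r powr (-2/3) *
        exp (- t\<^sup>2 * (delta_b b)\<^sup>2 - 7/32 * u powr (4/3) * t powr (-2/3) + 3/16 * u powr (2/3) * t powr (2/3))"
    using differentiableI_vector[OF deriv] vector_derivative_at[OF deriv] unfolding E_def by simp
qed

end
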